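(* Let $A$ be admissible, let $\ell>0$ with $A(x)=A_\infty$ for all $x\ge\ell$, and let $M:=\max_{x\in\mathbb{R}}|A'(x)/A(x)|$; assume $M>0$. Set $\lambda:=\frac M2e^{-M\ell}\sqrt{1-2M\ell e^{-2M\ell}}$, $\kappa:=\sqrt{\lambda^2+(M/2)^2}$ and $$g_1(x):=\frac{e^{Mx/2}}{\kappa}\big(\kappa\cosh(\kappa x)+(\lambda-M/2)\sinh(\kappa x)\big),\qquad g_2(x):=\frac{e^{Mx/2}}{\kappa}\big(\kappa\cosh(\kappa x)-(\lambda+M/2)\sinh(\kappa x)\big).$$ Then $g_1,g_2>0$ on $[0,\ell]$, $g_1(0)=g_2(0)=1$, and on $[0,\ell]$ $$g_1'-\tfrac M2|g_1-g_2|\ge\lambda g_1,\qquad -g_2'-\tfrac M2|g_1-g_2|\ge\lambda g_2.$$ Consequently, for every $\phi\in C_c^\infty(\mathbb{R})$ with $\operatorname{supp}\phi\subset(0,\infty)$ and $\tau_0:=\max\operatorname{supp}\phi$, the energy satisfies $\mathscr{E}_{\phi,g_1,g_2}(\tau)\le\mathscr{E}_{\phi,g_1,g_2}(\tau_0)e^{-\lambda(\tau-\tau_0)}$ for all $\tau>\tau_0$.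
   Context: A function $A:\mathbb{R}\to\mathbb{R}$ is admissible if $A\in C^\infty(\mathbb{R})$, $A>0$, and there are $x_+>x_->0$ and $A_\infty>0$ with $A(x)=1$ for $x<x_-$ and $A(x)=A_\infty$ for $x>x_+$. $\square_Au:=\partial_t^2u-\frac{1}{A(x)}\partial_x(A(x)\partial_xu)$. For $\phi\in C_c^\infty(\mathbb{R})$ supported in $(0,\infty)$, let $u\in C^\infty([0,\infty)\times\mathbb{R})$ solve $\square_Au=0$ for $x>0$, $t\in\mathbb{R}$; $\partial_xu(0,t)=\phi(t)$; $u(x,t)=0$ for $x>0$, $t<0$. For positive functions $g_1,g_2$ on $[0,\ell]$ the energy is $$\mathscr{E}_{\phi,g_1,g_2}(\tau):=\frac12\int_0^\ell\Big[g_1(x)\big(\partial_tu(x,\tau)+\partial_xu(x,\tau)\big)^2+g_2(x)\big(\partial_tu(x,\tau)-\partial_xu(x,\tau)\big)^2\Big]A(x)\,dx.$$ *)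

theory Defs
  imports "HOL-Analysis.Analysis"
begin

definition smooth1 :: "(real \<Rightarrow> real) \<Rightarrow> bool" where
  "smooth1 f \<longleftrightarrow> (\<forall>n x. ((deriv ^^ n) f) differentiable (at x))"

definition dX :: "(real \<times> real \<Rightarrow> real) \<Rightarrow> real \<times> real \<Rightarrow> real" where
  "dX f = (\<lambda>(x,t). deriv (\<lambda>y. f (y,t)) x)"
definition dT :: "(real \<times> real \<Rightarrow> real) \<Rightarrow> real \<times> real \<Rightarrow> real" where
  "dT f = (\<lambda>(x,t). deriv (\<lambda>s. f (x,s)) t)"

text \<open>Iterated partial derivative; True = d/dx, False = d/dt.\<close>
fun pd :: "bool list \<Rightarrow> (real \<times> real \<Rightarrow> real) \<Rightarrow> real \<times> real \<Rightarrow> real" where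
  "pd [] f = f"
| "pd (b # bs) f = (if b then dX else dT) (pd bs f)"

definition smooth2 :: "(real \<times> real \<Rightarrow> real) \<Rightarrow> bool" where
  "smooth2 f \<longleftrightarrow> (\<forall>bs. continuous_on UNIV (pd bs f) \<and>
      (\<forall>x t. (\<lambda>y. pd bs f (y,t)) differentiable (at x) \<and>
             (\<lambda>s. pd bs f (x,s)) differentiable (at t)))"

definition admissible :: "(real \<Rightarrow> real) \<Rightarrow> real \<Rightarrow> real \<Rightarrow> real \<Rightarrow> bool" where
  "admissible A xm xp Ainf \<longleftrightarrow> smooth1 A \<and> (\<forall>x. A x > 0) \<and> 0 < xm \<and> xm < xp \<and> Ainf > 0
     \<and> (\<forall>x. x < xm \<longrightarrow> A x = 1) \<and> (\<forall>x. x > xp \<longrightarrow> A x = Ainf)"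

definition supp :: "(real \<Rightarrow> real) \<Rightarrow> real set" where
  "supp \<phi> = closure {t. \<phi> t \<noteq> 0}"

text \<open>u (here: a smooth function U on R^2 whose restriction to x \<ge> 0 is u) solves the
  boundary value problem with Neumann data \<phi>.\<close>
definition solves_bvp :: "(real \<Rightarrow> real) \<Rightarrow> (real \<Rightarrow> real) \<Rightarrow> (real \<times> real \<Rightarrow> real) \<Rightarrow> bool" where
  "solves_bvp A \<phi> U \<longleftrightarrow> smooth2 U
     \<and> (\<forall>x t. x > 0 \<longrightarrow>
          pd [False, False] U (x,t) - (1 / A x) * deriv (\<lambda>y. A y * dX U (y,t)) x = 0)
     \<and> (\<forall>t. dX U (0,t) = \<phi> t)
     \<and> (\<forall>x t. x > 0 \<longrightarrow> t < 0 \<longrightarrow> U (x,t) = 0)"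

definition energy :: "(real \<Rightarrow> real) \<Rightarrow> (real \<times> real \<Rightarrow> real) \<Rightarrow> (real \<Rightarrow> real) \<Rightarrow> (real \<Rightarrow> real)
    \<Rightarrow> real \<Rightarrow> real \<Rightarrow> real" where
  "energy A U g1 g2 l \<tau> = 1/2 * integral {0..l}
     (\<lambda>x. (g1 x * (dT U (x,\<tau>) + dX U (x,\<tau>))^2 + g2 x * (dT U (x,\<tau>) - dX U (x,\<tau>))^2) * A x)"

definition lam :: "real \<Rightarrow> real \<Rightarrow> real" where
  "lam M l = M / 2 * exp (- M * l) * sqrt (1 - 2 * M * l * exp (- 2 * M * l))"

definition kap :: "real \<Rightarrow> real \<Rightarrow> real" where
  "kap M l = sqrt ((lam M l)^2 + (M/2)^2)"

definition g1 :: "real \<Rightarrow> real \<Rightarrow> real \<Rightarrow> real" where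
  "g1 M l x = exp (M * x / 2) / kap M l *
     (kap M l * cosh (kap M l * x) + (lam M l - M/2) * sinh (kap M l * x))"

definition g2 :: "real \<Rightarrow> real \<Rightarrow> real \<Rightarrow> real" where
  "g2 M l x = exp (M * x / 2) / kap M l *
     (kap M l * cosh (kap M l * x) - (lam M l + M/2) * sinh (kap M l * x))"

end

theory Submission
  imports Defs
begin

(* The weights solve the linear system g1' = lam g1 + (M/2)(g1 - g2), g2' = - lam g2 - (M/2)(g1 - g2),
   and g1 - g2 = (2 lam / kap) e^(Mx/2) sinh (kap x) >= 0, so the two differential inequalities hold
   with equality; the specific value of lam is only needed for the positivity of g2 on [0, l].
   Differentiating the energy in time and using A u_tt = (A u_x)_x, its rate of change is a boundary
   flux plus an integral whose integrand is at most -lam times the energy density, by |A'| <= M A and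
   the differential inequalities. After tau0 the flux vanishes at x = 0 (no boundary data, g1 0 = g2 0)
   and is nonpositive at x = l, because the medium is homogeneous beyond l and the wave there is
   purely outgoing (u_t + u_x = 0). So E' <= -lam E after tau0, and Gronwall gives the decay. *)

section \<open>The multipliers\<close>

lemma lam_pos:
  assumes "0 < M" "0 < l"
  shows "0 < lam M l"
proof -
  have "2 * M * l < exp (2 * M * l)"
    using exp_ge_add_one_self[of "2 * M * l"] by linarith
  then have "2 * M * l * exp (- 2 * M * l) < 1"
    by (simp add: exp_minus field_simps)
  then show ?thesis
    using assms by (simp add: lam_def)
qed

lemma lam_le:
  assumes "0 < M" "0 < l"
  shows "lam M l \<le> M / 2 * exp (- M * l)"
proof -
  have "sqrt (1 - 2 * M * l * exp (- 2 * M * l)) \<le> 1"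
    using assms by simp
  then show ?thesis
    using assms by (simp add: lam_def mult_left_le)
qed

lemma kap_squared: "(kap M l)\<^sup>2 = (lam M l)\<^sup>2 + (M / 2)\<^sup>2"
  by (simp add: kap_def)

lemma kap_pos: "0 < M \<Longrightarrow> 0 < kap M l"
  unfolding kap_def by (intro real_sqrt_gt_zero add_nonneg_pos) auto

lemma kap_gt:
  assumes "0 < M" "0 < l"
  shows "M / 2 < kap M l"
  unfolding kap_def using lam_pos[OF assms] by (intro real_less_rsqrt) simp

lemma kap_le:
  assumes "0 < M"
  shows "kap M l \<le> M / 2 + (lam M l)\<^sup>2 / M"
  unfolding kap_def
proof (rule real_le_lsqrt)
  show "0 \<le> M / 2 + (lam M l)\<^sup>2 / M"
    using assms by simp
  have "0 \<le> ((lam M l)\<^sup>2 / M)\<^sup>2" by simp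
  then show "(lam M l)\<^sup>2 + (M / 2)\<^sup>2 \<le> (M / 2 + (lam M l)\<^sup>2 / M)\<^sup>2"
    using assms by (simp add: power2_eq_square field_simps)
qed

lemma g1_0: "0 < M \<Longrightarrow> g1 M l 0 = 1"
  using kap_pos[of M l] by (simp add: g1_def)

lemma g2_0: "0 < M \<Longrightarrow> g2 M l 0 = 1"
  using kap_pos[of M l] by (simp add: g2_def)

lemma g1_minus_g2:
  "g1 M l x - g2 M l x = 2 * lam M l * exp (M * x / 2) / kap M l * sinh (kap M l * x)"
  by (simp add: g1_def g2_def algebra_simps)

lemma has_real_derivative_exp_cosh_sinh:
  fixes a b k M :: real
  shows "((\<lambda>x. exp (M * x / 2) * (a * cosh (k * x) + b * sinh (k * x))) has_real_derivative
      exp (M * x / 2) * ((M / 2 * a + b * k) * cosh (k * x) + (M / 2 * b + a * k) * sinh (k * x))) (at x)"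
  by (auto intro!: derivative_eq_intros simp: algebra_simps)

lemma has_real_derivative_g1:
  assumes "0 < M"
  shows "(g1 M l has_real_derivative lam M l * g1 M l x + M / 2 * (g1 M l x - g2 M l x)) (at x)"
proof (rule DERIV_cong)
  define k L where "k = kap M l" and "L = lam M l"
  have "k \<noteq> 0"
    using kap_pos[OF assms, of l] by (simp add: k_def)
  have "k\<^sup>2 = L\<^sup>2 + (M / 2)\<^sup>2"
    by (simp add: k_def L_def kap_squared)
  have "g1 M l = (\<lambda>x. exp (M * x / 2) * (1 * cosh (k * x) + (L - M / 2) / k * sinh (k * x)))"
    using \<open>k \<noteq> 0\<close> by (simp add: g1_def k_def L_def fun_eq_iff field_simps)
  then show "(g1 M l has_real_derivative exp (M * x / 2) *
      ((M / 2 * 1 + (L - M / 2) / k * k) * cosh (k * x) + (M / 2 * ((L - M / 2) / k) + 1 * k) * sinh (k * x))) (at x)"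
    by (simp only: has_real_derivative_exp_cosh_sinh)
  show "exp (M * x / 2) * ((M / 2 * 1 + (L - M / 2) / k * k) * cosh (k * x) +
      (M / 2 * ((L - M / 2) / k) + 1 * k) * sinh (k * x)) = L * g1 M l x + M / 2 * (g1 M l x - g2 M l x)"
    using \<open>k \<noteq> 0\<close> \<open>k\<^sup>2 = L\<^sup>2 + (M / 2)\<^sup>2\<close>
    unfolding g1_minus_g2 by (simp add: g1_def flip: k_def L_def) (simp add: field_simps power2_eq_square)
qed

lemma has_real_derivative_g2:
  assumes "0 < M"
  shows "(g2 M l has_real_derivative - lam M l * g2 M l x - M / 2 * (g1 M l x - g2 M l x)) (at x)"
proof (rule DERIV_cong)
  define k L where "k = kap M l" and "L = lam M l"
  have "k \<noteq> 0"
    using kap_pos[OF assms, of l] by (simp add: k_def)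
  have "k\<^sup>2 = L\<^sup>2 + (M / 2)\<^sup>2"
    by (simp add: k_def L_def kap_squared)
  have "g2 M l = (\<lambda>x. exp (M * x / 2) * (1 * cosh (k * x) + - (L + M / 2) / k * sinh (k * x)))"
    using \<open>k \<noteq> 0\<close> by (simp add: g2_def k_def L_def fun_eq_iff field_simps)
  then show "(g2 M l has_real_derivative exp (M * x / 2) *
      ((M / 2 * 1 + - (L + M / 2) / k * k) * cosh (k * x) + (M / 2 * (- (L + M / 2) / k) + 1 * k) * sinh (k * x))) (at x)"
    by (simp only: has_real_derivative_exp_cosh_sinh)
  show "exp (M * x / 2) * ((M / 2 * 1 + - (L + M / 2) / k * k) * cosh (k * x) +
      (M / 2 * (- (L + M / 2) / k) + 1 * k) * sinh (k * x)) = - L * g2 M l x - M / 2 * (g1 M l x - g2 M l x)"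
    using \<open>k \<noteq> 0\<close> \<open>k\<^sup>2 = L\<^sup>2 + (M / 2)\<^sup>2\<close>
    unfolding g1_minus_g2 by (simp add: g2_def flip: k_def L_def) (simp add: field_simps power2_eq_square)
qed

lemma deriv_g1: "0 < M \<Longrightarrow> deriv (g1 M l) x = lam M l * g1 M l x + M / 2 * (g1 M l x - g2 M l x)"
  by (rule DERIV_imp_deriv[OF has_real_derivative_g1])

lemma deriv_g2: "0 < M \<Longrightarrow> deriv (g2 M l) x = - lam M l * g2 M l x - M / 2 * (g1 M l x - g2 M l x)"
  by (rule DERIV_imp_deriv[OF has_real_derivative_g2])

lemma g2_le_g1:
  assumes "0 < M" "0 < l" "0 \<le> x"
  shows "g2 M l x \<le> g1 M l x"
proof -
  have "0 \<le> 2 * lam M l * exp (M * x / 2) / kap M l * sinh (kap M l * x)"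
    using lam_pos[OF assms(1,2)] kap_pos[OF assms(1), of l] assms(3) by simp
  then show ?thesis
    unfolding g1_minus_g2[symmetric] by simp
qed

lemma cosh_sinh_combination_pos:
  fixes a k y :: real
  assumes "(a - k) * exp (2 * y) < a + k"
  shows "0 < k * cosh y - a * sinh y"
proof -
  have "exp (2 * y) = exp y * exp y" "exp (- y) * exp y = 1"
    by (simp_all flip: exp_add)
  then have "k * cosh y - a * sinh y = exp (- y) * ((a + k) - (a - k) * exp (2 * y)) / 2"
    unfolding cosh_field_def sinh_field_def by (simp add: field_simps)
  also have "\<dots> > 0"
    using assms by simp
  finally show ?thesis .
qed

lemma g1_pos:
  assumes "0 < M" "0 < l"
  shows "0 < g1 M l x"
proof -
  define k L where "k = kap M l" and "L = lam M l"
  have "M / 2 < k" "0 < L"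
    using kap_gt[OF assms] lam_pos[OF assms] by (simp_all add: k_def L_def)
  moreover have "L < k"
    unfolding k_def L_def kap_def using assms by (intro real_less_rsqrt) simp
  ultimately have "(M / 2 - L - k) * exp (2 * (k * x)) < 0"
    by (intro mult_neg_pos) auto
  then have "0 < k * cosh (k * x) - (M / 2 - L) * sinh (k * x)"
    using \<open>L < k\<close> assms by (intro cosh_sinh_combination_pos) linarith
  then have "0 < k * cosh (k * x) + (L - M / 2) * sinh (k * x)"
    by (simp add: algebra_simps)
  then show ?thesis
    unfolding g1_def k_def[symmetric] L_def[symmetric] using \<open>M / 2 < k\<close> assms by simp
qed

lemma two_kap_mult_le:
  assumes "0 < M" "0 < l"
  shows "2 * kap M l * l \<le> M * l + 1 / 4"
proof -
  have "2 * M * l \<le> exp (2 * M * l)"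
    using exp_ge_add_one_self[of "2 * M * l"] by linarith
  then have "M * l * exp (- 2 * M * l) \<le> 1 / 2"
    by (simp add: exp_minus field_simps)
  have "(lam M l)\<^sup>2 \<le> (M / 2 * exp (- M * l))\<^sup>2"
    using lam_le[OF assms] lam_pos[OF assms] by (intro power_mono) auto
  also have "\<dots> = (M / 2)\<^sup>2 * exp (- 2 * M * l)"
    by (simp add: power_mult_distrib power2_eq_square flip: exp_add)
  finally have lam_sq: "(lam M l)\<^sup>2 \<le> (M / 2)\<^sup>2 * exp (- 2 * M * l)" .
  have "2 * kap M l * l \<le> 2 * l * (M / 2 + (lam M l)\<^sup>2 / M)"
    using kap_le[OF assms(1), of l] assms(2) by simp
  also have "\<dots> \<le> 2 * l * (M / 2 + (M / 2)\<^sup>2 * exp (- 2 * M * l) / M)"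
    using lam_sq assms by (intro mult_left_mono add_left_mono divide_right_mono) auto
  also have "\<dots> = M * l + M * l * exp (- 2 * M * l) / 2"
    using assms by (simp add: field_simps power2_eq_square)
  also have "\<dots> \<le> M * l + 1 / 4"
    using \<open>M * l * exp (- 2 * M * l) \<le> 1 / 2\<close> by simp
  finally show ?thesis .
qed

(* It suffices that (lam + M/2 - kap) e^(2 kap x) < lam + M/2 + kap. Since
   (lam + M/2 - kap) (lam + M/2 + kap) = lam M, the bounds lam <= (M/2) e^(-M l) and
   2 kap l <= M l + 1/4 turn this into 2 (M/2)^2 e^(1/4) < (lam + M/2 + kap)^2, true as e^(1/4) < 2. *)
lemma g2_pos:
  assumes "0 < M" "0 < l" "0 \<le> x" "x \<le> l"
  shows "0 < g2 M l x"
proof -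
  define k L m where "k = kap M l" and "L = lam M l" and "m = M / 2"
  have "m < k" "0 < L" "0 < m"
    using kap_gt[OF assms(1,2)] lam_pos[OF assms(1,2)] assms by (simp_all add: k_def L_def m_def)
  have "k\<^sup>2 = L\<^sup>2 + m\<^sup>2"
    by (simp add: k_def L_def m_def kap_squared)
  have "k\<^sup>2 < (L + m)\<^sup>2"
    using \<open>k\<^sup>2 = L\<^sup>2 + m\<^sup>2\<close> \<open>0 < L\<close> \<open>0 < m\<close> by (simp add: power2_sum)
  then have "k < L + m"
    using power_less_imp_less_base \<open>0 < L\<close> \<open>0 < m\<close> by force
  have "exp (2 * (k * x)) \<le> exp (2 * k * l)"
    using \<open>m < k\<close> \<open>0 < m\<close> assms(4) by simp
  then have "(L + m - k) * exp (2 * (k * x)) * (L + m + k) \<le> (L + m - k) * exp (2 * k * l) * (L + m + k)"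
    using \<open>k < L + m\<close> \<open>m < k\<close> \<open>0 < m\<close> by (intro mult_right_mono mult_left_mono) simp_all
  also have "\<dots> = 2 * m * (L * exp (2 * k * l))"
    using \<open>k\<^sup>2 = L\<^sup>2 + m\<^sup>2\<close> unfolding power2_eq_square by algebra
  also have "\<dots> \<le> 2 * m * (m * exp (- M * l) * exp (M * l + 1 / 4))"
    using lam_le[OF assms(1,2)] two_kap_mult_le[OF assms(1,2)] \<open>0 < L\<close> \<open>0 < m\<close>
    by (intro mult_left_mono mult_mono) (simp_all add: k_def L_def m_def)
  also have "\<dots> = 2 * m\<^sup>2 * exp (1 / 4)"
    by (simp add: power2_eq_square mult_ac flip: exp_add)
  also have "\<dots> \<le> 2 * m\<^sup>2 * 2"
    using exp_bound_half[of "1 / 4 :: real"] by (intro mult_left_mono) simp_all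
  also have "\<dots> = (2 * m)\<^sup>2"
    by (simp add: power2_eq_square)
  also have "\<dots> < (L + m + k)\<^sup>2"
    using \<open>m < k\<close> \<open>0 < L\<close> \<open>0 < m\<close> by (intro power_strict_mono) simp_all
  finally have "(L + m - k) * exp (2 * (k * x)) < L + m + k"
    using \<open>m < k\<close> \<open>0 < L\<close> \<open>0 < m\<close> by (simp add: power2_eq_square mult_less_cancel_right)
  then have "0 < k * cosh (k * x) - (L + m) * sinh (k * x)"
    by (rule cosh_sinh_combination_pos)
  then show ?thesis
    unfolding g2_def k_def[symmetric] L_def[symmetric] using \<open>m < k\<close> \<open>0 < m\<close> by (simp add: m_def)
qed

section \<open>Smooth functions of position and time\<close>

lemma smooth2_continuous_on: "smooth2 U \<Longrightarrow> continuous_on S (pd bs U)"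
  unfolding smooth2_def using continuous_on_subset by blast

lemma smooth2_has_dx:
  assumes "smooth2 U"
  shows "((\<lambda>y. pd bs U (y, t)) has_real_derivative pd (True # bs) U (x, t)) (at x)"
  using assms DERIV_deriv_iff_real_differentiable by (auto simp: smooth2_def dX_def)

lemma smooth2_has_dt:
  assumes "smooth2 U"
  shows "((\<lambda>s. pd bs U (x, s)) has_real_derivative pd (False # bs) U (x, t)) (at t)"
  using assms DERIV_deriv_iff_real_differentiable by (auto simp: smooth2_def dT_def)

lemma smooth2_continuous_on_x:
  assumes "smooth2 U"
  shows "continuous_on S (\<lambda>y. pd bs U (y, t))"
  using DERIV_isCont[OF smooth2_has_dx[OF assms]] by (blast intro: continuous_at_imp_continuous_on)

lemma smooth2_has_derivative:
  assumes U: "smooth2 U"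
  shows "(pd bs U has_derivative
      (\<lambda>(h, k). pd (True # bs) U (x, t) * h + pd (False # bs) U (x, t) * k)) (at (x, t))"
proof -
  have dx: "((\<lambda>x. pd bs U (x, t)) has_derivative (\<lambda>h. pd (True # bs) U (x, t) * h)) (at x within UNIV)"
    using smooth2_has_dx[OF U] by (simp add: has_field_derivative_def)
  have dt: "((\<lambda>s. pd bs U (y, s)) has_derivative blinfun_mult_right (pd (False # bs) U (y, s'))) (at s' within UNIV)"
    for y s'
    using smooth2_has_dt[OF U] by (simp add: has_field_derivative_def mult.commute blinfun_mult_right.rep_eq)
  have "isCont (pd (False # bs) U) (x, t)"
    by (metis UNIV_I continuous_on_eq_continuous_at open_UNIV smooth2_continuous_on[OF U])
  then have "continuous (at (x, t)) (\<lambda>z. blinfun_mult_right (pd (False # bs) U z))"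
    by (rule bounded_linear.continuous[OF bounded_linear_blinfun_mult_right])
  then have "continuous (at (x, t) within UNIV \<times> UNIV) (\<lambda>(y, s). blinfun_mult_right (pd (False # bs) U (y, s)))"
    by (simp add: case_prod_beta')
  from has_derivative_partialsI[OF dx dt this] show ?thesis
    by (simp add: blinfun_mult_right.rep_eq case_prod_beta')
qed

lemma smooth2_has_derivative_antidiagonal:
  assumes U: "smooth2 U"
  shows "((\<lambda>s. pd bs U (x + s, t - s)) has_real_derivative
      pd (True # bs) U (x + s, t - s) - pd (False # bs) U (x + s, t - s)) (at s)"
proof -
  have "((\<lambda>s. (x + s, t - s)) has_derivative (\<lambda>h. (h, - h))) (at s)"
    by (auto intro!: derivative_eq_intros)
  from has_derivative_compose[OF this smooth2_has_derivative[OF U]] show ?thesis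
    unfolding has_field_derivative_def by (rule has_derivative_eq_rhs) (auto simp: fun_eq_iff algebra_simps)
qed

lemma smooth2_dt_eq_integral:
  assumes U: "smooth2 U" and "a \<le> x"
  shows "pd [False] U (x, t) = pd [False] U (a, t) + integral {a..x} (\<lambda>y. pd [False, True] U (y, t))"
proof -
  have cont: "continuous_on S (\<lambda>(s, y). pd [False, True] U (y, s))" for S
    unfolding case_prod_beta'
    by (rule continuous_on_compose2[OF smooth2_continuous_on[OF U, of UNIV]]) (auto intro!: continuous_intros)
  have ftc: "U (x, s) = U (a, s) + integral {a..x} (\<lambda>y. pd [True] U (y, s))" for s
  proof -
    have "((\<lambda>y. pd [True] U (y, s)) has_integral U (x, s) - U (a, s)) {a..x}"
      using smooth2_has_dx[OF U, of "[]"] \<open>a \<le> x\<close>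
      by (intro fundamental_theorem_of_calculus) (auto simp: has_real_derivative_iff_has_vector_derivative[symmetric] has_field_derivative_at_within)
    then show ?thesis by (simp add: integral_unique)
  qed
  have "((\<lambda>s. integral (cbox a x) (\<lambda>y. pd [True] U (y, s))) has_real_derivative
      integral (cbox a x) (\<lambda>y. pd [False, True] U (y, t))) (at t within UNIV)"
  proof (rule leibniz_rule_field_derivative[where f="\<lambda>s y. pd [True] U (y, s)"])
    show "(\<lambda>y. pd [True] U (y, s)) integrable_on cbox a x" for s
      unfolding box_real by (rule integrable_continuous_interval[OF smooth2_continuous_on_x[OF U]])
  qed (use smooth2_has_dt[OF U, of "[True]"] cont in auto)
  then have "((\<lambda>s. U (x, s)) has_real_derivative
      pd [False] U (a, t) + integral {a..x} (\<lambda>y. pd [False, True] U (y, t))) (at t)"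
    unfolding ftc using smooth2_has_dt[OF U, of "[]" a t] by (auto intro!: derivative_eq_intros simp: box_real)
  with smooth2_has_dt[OF U, of "[]" x t] show ?thesis
    using DERIV_unique by auto
qed

lemma smooth2_mixed_partials:
  assumes U: "smooth2 U"
  shows "pd [True, False] U (x, t) = pd [False, True] U (x, t)"
proof -
  define a where "a = x - 1"
  have "continuous_on {a..x + 1} (\<lambda>y. pd [False, True] U (y, t))"
    by (rule continuous_on_compose2[OF smooth2_continuous_on[OF U]]) (auto intro!: continuous_intros)
  from integral_has_real_derivative[OF this, of x] have
    "((\<lambda>y. pd [False] U (a, t) + integral {a..y} (\<lambda>y. pd [False, True] U (y, t))) has_real_derivative
      pd [False, True] U (x, t)) (at x)"
    by (auto intro!: derivative_eq_intros simp: a_def at_within_Icc_at)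
  then have "((\<lambda>y. pd [False] U (y, t)) has_real_derivative pd [False, True] U (x, t)) (at x)"
  proof (rule has_field_derivative_transform_within_open[where S="{a<..}"])
    fix y assume "y \<in> {a<..}"
    then show "pd [False] U (a, t) + integral {a..y} (\<lambda>y. pd [False, True] U (y, t)) = pd [False] U (y, t)"
      using smooth2_dt_eq_integral[OF U, of a y t] by simp
  qed (simp_all add: a_def)
  with smooth2_has_dx[OF U, of "[False]" t x] show ?thesis
    using DERIV_unique by blast
qed

section \<open>The coefficient\<close>

lemma deriv_eq_0_if_locally_constant:
  fixes f :: "real \<Rightarrow> real"
  assumes "open S" "x \<in> S" "\<And>y. y \<in> S \<Longrightarrow> f y = c"
  shows "deriv f x = 0"
proof -
  have "deriv f x = deriv (\<lambda>_. c) x"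
    using assms by (intro deriv_cong_ev) (auto simp: eventually_nhds)
  then show ?thesis by simp
qed

lemma admissible_pos: "admissible A xm xp Ainf \<Longrightarrow> 0 < A x"
  by (simp add: admissible_def)

lemma admissible_has_derivative:
  assumes "admissible A xm xp Ainf"
  shows "(A has_real_derivative deriv A x) (at x)"
proof -
  have "(deriv ^^ 0) A differentiable (at x)"
    using assms by (simp only: admissible_def smooth1_def)
  then show ?thesis
    by (simp add: DERIV_deriv_iff_real_differentiable)
qed

lemma admissible_continuous_on:
  assumes "admissible A xm xp Ainf"
  shows "continuous_on S A"
  using DERIV_isCont[OF admissible_has_derivative[OF assms]]
  by (blast intro: continuous_at_imp_continuous_on)

lemma admissible_continuous_on_deriv:
  assumes "admissible A xm xp Ainf"
  shows "continuous_on S (deriv A)"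
proof -
  have "(deriv ^^ 1) A differentiable (at x)" for x
    using assms by (simp only: admissible_def smooth1_def)
  then show ?thesis
    by (auto intro!: continuous_at_imp_continuous_on differentiable_imp_continuous_within)
qed

lemma admissible_deriv_bound:
  assumes adm: "admissible A xm xp Ainf"
    and M_def: "M = Sup (range (\<lambda>x. \<bar>deriv A x / A x\<bar>))"
  shows "\<bar>deriv A x\<bar> \<le> M * A x"
proof -
  define f where "f x = \<bar>deriv A x / A x\<bar>" for x
  have pos: "0 < A y" and nz: "A y \<noteq> 0" for y
    using admissible_pos[OF adm] by (simp_all add: less_imp_neq[symmetric])
  have "xm \<le> xp"
    using adm by (simp add: admissible_def)
  have "continuous_on {xm..xp} f"
    unfolding f_def[abs_def]
    by (intro continuous_intros admissible_continuous_on_deriv[OF adm] admissible_continuous_on[OF adm] ballI nz)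
  then obtain z where "z \<in> {xm..xp}" and z_max: "\<And>y. y \<in> {xm..xp} \<Longrightarrow> f y \<le> f z"
    using continuous_attains_sup[of "{xm..xp}" f] \<open>xm \<le> xp\<close> by auto
  have outside: "f y = 0" if "y \<notin> {xm..xp}" for y
  proof -
    have "deriv A y = 0"
    proof (cases "y < xm")
      case True
      then show ?thesis
        using adm by (intro deriv_eq_0_if_locally_constant[of "{..<xm}" _ _ 1]) (auto simp: admissible_def)
    next
      case False
      with that have "xp < y" by auto
      then show ?thesis
        using adm by (intro deriv_eq_0_if_locally_constant[of "{xp<..}" _ _ Ainf]) (auto simp: admissible_def)
    qed
    then show ?thesis by (simp add: f_def)
  qed
  have "f y \<le> f z" for y
    using z_max[of y] outside[of y] by (cases "y \<in> {xm..xp}") (auto simp: f_def)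
  then have "f x \<le> M"
    unfolding M_def f_def[symmetric] by (intro cSup_upper bdd_aboveI[of _ "f z"]) auto
  then show ?thesis
    using pos[of x] by (simp add: f_def abs_div pos_divide_le_eq)
qed

section \<open>Solutions of the boundary value problem\<close>

lemma solves_bvp_smooth2: "solves_bvp A \<phi> U \<Longrightarrow> smooth2 U"
  by (simp add: solves_bvp_def)

lemma solves_bvp_wave_equation:
  assumes sol: "solves_bvp A \<phi> U" and "(A has_real_derivative A') (at x)" "A x \<noteq> 0" "0 < x"
  shows "A x * pd [False, False] U (x, t) = A x * pd [True, True] U (x, t) + A' * pd [True] U (x, t)"
proof -
  have "((\<lambda>y. A y * pd [True] U (y, t)) has_real_derivative A' * pd [True] U (x, t) + A x * pd [True, True] U (x, t)) (at x)"
    using assms(2) smooth2_has_dx[OF solves_bvp_smooth2[OF sol], of "[True]" t x]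
    by (auto intro!: derivative_eq_intros)
  then have "deriv (\<lambda>y. A y * dX U (y, t)) x = A' * pd [True] U (x, t) + A x * pd [True, True] U (x, t)"
    by (simp add: DERIV_imp_deriv)
  moreover have "pd [False, False] U (x, t) = 1 / A x * deriv (\<lambda>y. A y * dX U (y, t)) x"
    using sol \<open>0 < x\<close> by (simp add: solves_bvp_def)
  ultimately show ?thesis
    using \<open>A x \<noteq> 0\<close> by (simp add: field_simps)
qed

lemma solves_bvp_partials_vanish_before:
  assumes "solves_bvp A \<phi> U" "0 < x" "t < 0"
  shows "pd [False] U (x, t) = 0" "pd [True] U (x, t) = 0"
proof -
  have U0: "U (y, s) = 0" if "0 < y" "s < 0" for y s
    using assms(1) that by (simp add: solves_bvp_def)
  have "deriv (\<lambda>s. U (x, s)) t = 0"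
    by (rule deriv_eq_0_if_locally_constant[of "{..<0}"]) (use assms U0 in auto)
  then show "pd [False] U (x, t) = 0"
    by (simp add: dT_def)
  have "deriv (\<lambda>y. U (y, t)) x = 0"
    by (rule deriv_eq_0_if_locally_constant[of "{0<..}"]) (use assms U0 in auto)
  then show "pd [True] U (x, t) = 0"
    by (simp add: dX_def)
qed

(* Beyond l the equation is the free wave equation, so u_t + u_x is constant along the lines
   x + t = const, which run into the region t < 0 where u vanishes. *)
lemma solves_bvp_outgoing:
  assumes sol: "solves_bvp A \<phi> U" and "0 < l" "A l \<noteq> 0" and A_const: "\<And>x. l \<le> x \<Longrightarrow> A x = A l"
  shows "pd [False] U (l, t) + pd [True] U (l, t) = 0"
proof -
  have U: "smooth2 U"
    using sol by (rule solves_bvp_smooth2)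
  define h where "h s = pd [False] U (l + s, t - s) + pd [True] U (l + s, t - s)" for s
  have h_deriv: "(h has_real_derivative
      (pd [True, False] U (l + s, t - s) - pd [False, False] U (l + s, t - s)) +
      (pd [True, True] U (l + s, t - s) - pd [False, True] U (l + s, t - s))) (at s)" for s
    unfolding h_def[abs_def]
    by (intro DERIV_add smooth2_has_derivative_antidiagonal[OF U])
  have "(h has_real_derivative 0) (at s)" if "0 < s" for s
  proof -
    have "(A has_real_derivative 0) (at (l + s))"
    proof (rule has_field_derivative_transform_within_open[where S="{l<..}"])
      show "((\<lambda>_. A l) has_real_derivative 0) (at (l + s))"
        by simp
      show "A l = A y" if "y \<in> {l<..}" for y
        using that A_const[of y] by simp
    qed (use \<open>0 < s\<close> in simp_all)
    then have "pd [False, False] U (l + s, t - s) = pd [True, True] U (l + s, t - s)"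
      using solves_bvp_wave_equation[OF sol, of 0 "l + s" "t - s"] A_const[of "l + s"] \<open>0 < l\<close> \<open>0 < s\<close> \<open>A l \<noteq> 0\<close>
      by simp
    with h_deriv[of s] smooth2_mixed_partials[OF U, of "l + s" "t - s"] show ?thesis
      by simp
  qed
  moreover have "continuous_on {0..\<bar>t\<bar> + 1} h"
    by (intro continuous_at_imp_continuous_on ballI DERIV_isCont[OF h_deriv])
  ultimately have "h (\<bar>t\<bar> + 1) = h 0"
    by (intro DERIV_isconst_end) auto
  moreover have "h (\<bar>t\<bar> + 1) = 0"
    using solves_bvp_partials_vanish_before[OF sol, of "l + (\<bar>t\<bar> + 1)" "t - (\<bar>t\<bar> + 1)"] \<open>0 < l\<close>
    by (simp add: h_def)
  ultimately show ?thesis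
    by (simp add: h_def)
qed

section \<open>Weighted energy\<close>

definition dplus :: "(real \<times> real \<Rightarrow> real) \<Rightarrow> real \<Rightarrow> real \<Rightarrow> real" where
  "dplus U \<tau> x = pd [False] U (x, \<tau>) + pd [True] U (x, \<tau>)"

definition dminus :: "(real \<times> real \<Rightarrow> real) \<Rightarrow> real \<Rightarrow> real \<Rightarrow> real" where
  "dminus U \<tau> x = pd [False] U (x, \<tau>) - pd [True] U (x, \<tau>)"

definition energy_density ::
    "(real \<Rightarrow> real) \<Rightarrow> (real \<times> real \<Rightarrow> real) \<Rightarrow> (real \<Rightarrow> real) \<Rightarrow> (real \<Rightarrow> real) \<Rightarrow> real \<Rightarrow> real \<Rightarrow> real" where
  "energy_density A U w1 w2 \<tau> x = (w1 x * (dplus U \<tau> x)\<^sup>2 + w2 x * (dminus U \<tau> x)\<^sup>2) * A x"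

definition energy_rate_density ::
    "(real \<Rightarrow> real) \<Rightarrow> (real \<times> real \<Rightarrow> real) \<Rightarrow> (real \<Rightarrow> real) \<Rightarrow> (real \<Rightarrow> real) \<Rightarrow> real \<Rightarrow> real \<Rightarrow> real" where
  "energy_rate_density A U w1 w2 \<tau> x =
     (w1 x * dplus U \<tau> x * (pd [False, False] U (x, \<tau>) + pd [False, True] U (x, \<tau>)) +
      w2 x * dminus U \<tau> x * (pd [False, False] U (x, \<tau>) - pd [False, True] U (x, \<tau>))) * A x"

definition energy_flux ::
    "(real \<Rightarrow> real) \<Rightarrow> (real \<times> real \<Rightarrow> real) \<Rightarrow> (real \<Rightarrow> real) \<Rightarrow> (real \<Rightarrow> real) \<Rightarrow> real \<Rightarrow> real \<Rightarrow> real" where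
  "energy_flux A U w1 w2 \<tau> x = A x * (w1 x * (dplus U \<tau> x)\<^sup>2 - w2 x * (dminus U \<tau> x)\<^sup>2) / 2"

lemma energy_eq_integral: "energy A U w1 w2 l \<tau> = integral {0..l} (energy_density A U w1 w2 \<tau>) / 2"
  by (simp add: energy_def energy_density_def[abs_def] dplus_def dminus_def)

lemma continuous_on_snd_comp:
  "continuous_on S f \<Longrightarrow> continuous_on (T \<times> S) (\<lambda>z. f (snd z))"
  by (rule continuous_on_compose2[OF _ continuous_on_snd]) auto

lemma energy_has_derivative:
  assumes U: "smooth2 U"
    and cont: "continuous_on {0..l} w1" "continuous_on {0..l} w2" "continuous_on {0..l} A"
  shows "((\<lambda>\<tau>. energy A U w1 w2 l \<tau>) has_real_derivative
      integral {0..l} (energy_rate_density A U w1 w2 \<tau>)) (at \<tau>)"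
proof -
  have pd_cont: "continuous_on S (\<lambda>z. pd bs U (snd z, fst z))" for S bs
    by (rule continuous_on_compose2[OF smooth2_continuous_on[OF U, of UNIV]]) (auto intro!: continuous_intros)
  have "((\<lambda>\<tau>. integral (cbox 0 l) (energy_density A U w1 w2 \<tau>)) has_real_derivative
      integral (cbox 0 l) (\<lambda>x. 2 * energy_rate_density A U w1 w2 \<tau> x)) (at \<tau> within UNIV)"
  proof (rule leibniz_rule_field_derivative)
    show "((\<lambda>\<tau>. energy_density A U w1 w2 \<tau> x) has_real_derivative 2 * energy_rate_density A U w1 w2 s x)
        (at s within UNIV)" for s x
      unfolding energy_density_def energy_rate_density_def dplus_def dminus_def
      by (rule DERIV_cong, (rule derivative_eq_intros smooth2_has_dt[OF U] refl)+)
        (simp add: algebra_simps power2_eq_square)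
    show "energy_density A U w1 w2 s integrable_on cbox 0 l" for s
      unfolding box_real energy_density_def dplus_def dminus_def
      by (intro integrable_continuous_interval continuous_intros cont smooth2_continuous_on_x[OF U])
    show "continuous_on (UNIV \<times> cbox 0 l) (\<lambda>(s, x). 2 * energy_rate_density A U w1 w2 s x)"
      unfolding box_real energy_rate_density_def dplus_def dminus_def case_prod_beta'
      by (intro continuous_intros continuous_on_snd_comp cont pd_cont)
  qed auto
  then show ?thesis
    unfolding energy_eq_integral box_real by (auto intro!: derivative_eq_intros)
qed

(* The cross term is absorbed by 2 |p q| <= p^2 + q^2; this is what the terms M/2 |w1 - w2|
   in the hypotheses pay for. *)
lemma weighted_remainder_le:
  fixes a a' w1 w2 w1' w2' p q M lam :: real
  assumes "0 \<le> a" "\<bar>a'\<bar> \<le> M * a"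
    and w1': "lam * w1 + M / 2 * \<bar>w1 - w2\<bar> \<le> w1'"
    and w2': "lam * w2 + M / 2 * \<bar>w1 - w2\<bar> \<le> - w2'"
  shows "(a' * (w2 - w1) * p * q - a * w1' * p\<^sup>2 + a * w2' * q\<^sup>2) / 2
    \<le> - lam * ((w1 * p\<^sup>2 + w2 * q\<^sup>2) * a) / 2"
proof -
  have "2 * \<bar>p * q\<bar> \<le> p\<^sup>2 + q\<^sup>2"
    using sum_squares_bound[of "\<bar>p\<bar>" "\<bar>q\<bar>"] by (simp add: abs_mult)
  have "a' * (w2 - w1) * p * q \<le> \<bar>a' * (w2 - w1) * p * q\<bar>"
    by (rule abs_ge_self)
  also have "\<dots> = \<bar>a'\<bar> * \<bar>w1 - w2\<bar> * \<bar>p * q\<bar>"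
    by (simp add: abs_mult abs_minus_commute)
  also have "\<dots> \<le> (M * a) * \<bar>w1 - w2\<bar> * ((p\<^sup>2 + q\<^sup>2) / 2)"
    using assms(2) \<open>2 * \<bar>p * q\<bar> \<le> p\<^sup>2 + q\<^sup>2\<close> by (intro mult_mono) auto
  finally have cross: "a' * (w2 - w1) * p * q \<le> M * a * \<bar>w1 - w2\<bar> * (p\<^sup>2 + q\<^sup>2) / 2"
    by simp
  have "a * (lam * w1 + M / 2 * \<bar>w1 - w2\<bar>) * p\<^sup>2 \<le> a * w1' * p\<^sup>2"
    using w1' \<open>0 \<le> a\<close> by (intro mult_right_mono mult_left_mono) auto
  moreover have "a * w2' * q\<^sup>2 \<le> - (a * (lam * w2 + M / 2 * \<bar>w1 - w2\<bar>) * q\<^sup>2)"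
    using mult_right_mono[OF mult_left_mono[OF w2' \<open>0 \<le> a\<close>], of "q\<^sup>2"] by simp
  ultimately have "(a' * (w2 - w1) * p * q - a * w1' * p\<^sup>2 + a * w2' * q\<^sup>2) / 2
    \<le> (M * a * \<bar>w1 - w2\<bar> * (p\<^sup>2 + q\<^sup>2) / 2 - a * (lam * w1 + M / 2 * \<bar>w1 - w2\<bar>) * p\<^sup>2
        - a * (lam * w2 + M / 2 * \<bar>w1 - w2\<bar>) * q\<^sup>2) / 2"
    using cross by argo
  also have "\<dots> = - lam * ((w1 * p\<^sup>2 + w2 * q\<^sup>2) * a) / 2"
    by (simp add: field_simps)
  finally show ?thesis .
qed

lemma exp_decay_if_deriv_le:
  fixes E E' :: "real \<Rightarrow> real"
  assumes "a \<le> b" "continuous_on {a..b} E"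
    and E': "\<And>s. a < s \<Longrightarrow> s < b \<Longrightarrow> (E has_real_derivative E' s) (at s)"
    and le: "\<And>s. a < s \<Longrightarrow> s < b \<Longrightarrow> E' s \<le> - c * E s"
  shows "E b \<le> E a * exp (- c * (b - a))"
proof -
  define F where "F s = E s * exp (c * s)" for s
  have "F b \<le> F a"
  proof (rule DERIV_nonpos_imp_decreasing_open[OF \<open>a \<le> b\<close>])
    fix s assume s: "a < s" "s < b"
    have "(F has_real_derivative (E' s + c * E s) * exp (c * s)) (at s)"
      unfolding F_def[abs_def] using E'[OF s] by (auto intro!: derivative_eq_intros simp: algebra_simps)
    moreover have "(E' s + c * E s) * exp (c * s) \<le> 0"
      using le[OF s] by (simp add: mult_nonpos_nonneg)
    ultimately show "\<exists>y. (F has_real_derivative y) (at s) \<and> y \<le> 0"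
      by blast
  next
    show "continuous_on {a..b} F"
      unfolding F_def by (intro continuous_intros assms(2))
  qed
  then have "E b * exp (c * b) * exp (- c * b) \<le> E a * exp (c * a) * exp (- c * b)"
    by (simp add: F_def)
  then show ?thesis
    by (simp add: mult.assoc algebra_simps flip: exp_add)
qed

locale dissipative_weights =
  fixes A A' w1 w2 w1' w2' :: "real \<Rightarrow> real" and l M lam :: real
  assumes l_pos: "0 < l"
    and A_deriv: "\<And>x. x \<in> {0..l} \<Longrightarrow> (A has_real_derivative A' x) (at x)"
    and A_pos: "\<And>x. x \<in> {0..l} \<Longrightarrow> 0 < A x"
    and A'_bound: "\<And>x. x \<in> {0..l} \<Longrightarrow> \<bar>A' x\<bar> \<le> M * A x"
    and A_const: "\<And>x. l \<le> x \<Longrightarrow> A x = A l"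
    and w1_deriv: "\<And>x. x \<in> {0..l} \<Longrightarrow> (w1 has_real_derivative w1' x) (at x within {0..l})"
    and w2_deriv: "\<And>x. x \<in> {0..l} \<Longrightarrow> (w2 has_real_derivative w2' x) (at x within {0..l})"
    and w_0: "w1 0 = w2 0"
    and w2_l: "0 \<le> w2 l"
    and w1'_ge: "\<And>x. x \<in> {0..l} \<Longrightarrow> lam * w1 x + M / 2 * \<bar>w1 x - w2 x\<bar> \<le> w1' x"
    and w2'_le: "\<And>x. x \<in> {0..l} \<Longrightarrow> lam * w2 x + M / 2 * \<bar>w1 x - w2 x\<bar> \<le> - w2' x"
begin

lemma continuous_on_coefficients:
  "continuous_on {0..l} A" "continuous_on {0..l} w1" "continuous_on {0..l} w2"
  by (rule DERIV_continuous_on, erule has_field_derivative_at_within[OF A_deriv] w1_deriv w2_deriv)+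

lemma energy_flux_has_derivative:
  assumes sol: "solves_bvp A \<phi> U" and x: "0 < x" "x < l"
  shows "(energy_flux A U w1 w2 \<tau> has_real_derivative energy_rate_density A U w1 w2 \<tau> x -
      (A' x * (w2 x - w1 x) * dplus U \<tau> x * dminus U \<tau> x
        - A x * w1' x * (dplus U \<tau> x)\<^sup>2 + A x * w2' x * (dminus U \<tau> x)\<^sup>2) / 2) (at x)"
proof -
  have U: "smooth2 U"
    using sol by (rule solves_bvp_smooth2)
  have at_x: "at x within {0..l} = at x"
    using x by (rule at_within_Icc_at)
  have w1: "(w1 has_real_derivative w1' x) (at x)" and w2: "(w2 has_real_derivative w2' x) (at x)"
    using w1_deriv[of x] w2_deriv[of x] x by (simp_all add: at_x)
  have A: "(A has_real_derivative A' x) (at x)"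
    using A_deriv x by simp
  define ut ux utt uxx uxt where "ut = pd [False] U (x, \<tau>)" and "ux = pd [True] U (x, \<tau>)"
    and "utt = pd [False, False] U (x, \<tau>)" and "uxx = pd [True, True] U (x, \<tau>)"
    and "uxt = pd [False, True] U (x, \<tau>)"
  have dplus: "((\<lambda>y. dplus U \<tau> y) has_real_derivative uxt + uxx) (at x)"
    and dminus: "((\<lambda>y. dminus U \<tau> y) has_real_derivative uxt - uxx) (at x)"
    unfolding dplus_def[abs_def] dminus_def[abs_def] uxt_def uxx_def smooth2_mixed_partials[OF U, symmetric]
    by (intro DERIV_add DERIV_diff smooth2_has_dx[OF U])+
  have wave: "A x * utt = A x * uxx + A' x * ux"
    unfolding utt_def uxx_def ux_def
    using solves_bvp_wave_equation[OF sol A] A_pos[of x] x by simp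
  have P: "dplus U \<tau> x = ut + ux" and Q: "dminus U \<tau> x = ut - ux"
    by (simp_all add: dplus_def dminus_def ut_def ux_def)
  have "(energy_flux A U w1 w2 \<tau> has_real_derivative
      (A' x * (w1 x * (ut + ux)\<^sup>2 - w2 x * (ut - ux)\<^sup>2)
       + A x * (w1' x * (ut + ux)\<^sup>2 + 2 * w1 x * (ut + ux) * (uxt + uxx)
                - w2' x * (ut - ux)\<^sup>2 - 2 * w2 x * (ut - ux) * (uxt - uxx))) / 2) (at x)"
    unfolding energy_flux_def[abs_def]
    by (auto intro!: derivative_eq_intros A w1 w2 dplus dminus simp: P Q field_simps power2_eq_square)
  also have "(A' x * (w1 x * (ut + ux)\<^sup>2 - w2 x * (ut - ux)\<^sup>2)
       + A x * (w1' x * (ut + ux)\<^sup>2 + 2 * w1 x * (ut + ux) * (uxt + uxx)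
                - w2' x * (ut - ux)\<^sup>2 - 2 * w2 x * (ut - ux) * (uxt - uxx))) / 2
    = w1 x * (ut + ux) * (A x * uxx + A' x * ux + A x * uxt)
      + w2 x * (ut - ux) * (A x * uxx + A' x * ux - A x * uxt)
      - (A' x * (w2 x - w1 x) * (ut + ux) * (ut - ux) - A x * w1' x * (ut + ux)\<^sup>2 + A x * w2' x * (ut - ux)\<^sup>2) / 2"
    by (simp add: field_simps power2_eq_square)
  also have "w1 x * (ut + ux) * (A x * uxx + A' x * ux + A x * uxt)
      + w2 x * (ut - ux) * (A x * uxx + A' x * ux - A x * uxt)
    = (w1 x * (ut + ux) * (utt + uxt) + w2 x * (ut - ux) * (utt - uxt)) * A x"
    unfolding wave[symmetric] by (simp add: algebra_simps)
  also have "\<dots> = energy_rate_density A U w1 w2 \<tau> x"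
    by (simp add: energy_rate_density_def P Q utt_def uxt_def)
  finally show ?thesis
    by (simp only: P Q)
qed

lemma energy_dissipation:
  assumes sol: "solves_bvp A \<phi> U" and "\<phi> \<tau> = 0"
  shows "integral {0..l} (energy_rate_density A U w1 w2 \<tau>) \<le> - lam * energy A U w1 w2 l \<tau>"
proof -
  have U: "smooth2 U"
    using sol by (rule solves_bvp_smooth2)
  define flux where "flux = energy_flux A U w1 w2 \<tau>"
  define rate where "rate = energy_rate_density A U w1 w2 \<tau>"
  define rem where "rem x = (A' x * (w2 x - w1 x) * dplus U \<tau> x * dminus U \<tau> x
      - A x * w1' x * (dplus U \<tau> x)\<^sup>2 + A x * w2' x * (dminus U \<tau> x)\<^sup>2) / 2" for x
  have "continuous_on {0..l} flux"
    unfolding flux_def energy_flux_def[abs_def] dplus_def dminus_def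
    by (intro continuous_intros continuous_on_coefficients smooth2_continuous_on_x[OF U]) simp
  then have ftc: "((\<lambda>x. rate x - rem x) has_integral flux l - flux 0) {0..l}"
    using l_pos energy_flux_has_derivative[OF sol]
    by (intro fundamental_theorem_of_calculus_interior)
      (auto simp: flux_def rate_def rem_def has_real_derivative_iff_has_vector_derivative)
  have "rate integrable_on {0..l}"
    unfolding rate_def energy_rate_density_def[abs_def] dplus_def dminus_def
    by (intro integrable_continuous_interval continuous_intros continuous_on_coefficients smooth2_continuous_on_x[OF U])
  from integrable_diff[OF this has_integral_integrable[OF ftc]] have "rem integrable_on {0..l}"
    by simp
  have "flux 0 = 0"
  proof -
    have "pd [True] U (0, \<tau>) = 0"
      using sol \<open>\<phi> \<tau> = 0\<close> by (simp add: solves_bvp_def)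
    then show ?thesis
      by (simp add: flux_def energy_flux_def dplus_def dminus_def w_0)
  qed
  have "flux l \<le> 0"
  proof -
    have "dplus U \<tau> l = 0"
      unfolding dplus_def using A_pos[of l] l_pos
      by (intro solves_bvp_outgoing[OF sol l_pos _ A_const]) auto
    then show ?thesis
      using A_pos[of l] l_pos w2_l by (simp add: flux_def energy_flux_def)
  qed
  have rem_le: "rem x \<le> - lam / 2 * energy_density A U w1 w2 \<tau> x" if "x \<in> {0..l}" for x
    using weighted_remainder_le[OF less_imp_le[OF A_pos] A'_bound w1'_ge w2'_le, OF that that that that]
    by (simp add: rem_def energy_density_def)
  have "integral {0..l} rem \<le> integral {0..l} (\<lambda>x. - lam / 2 * energy_density A U w1 w2 \<tau> x)"
  proof (rule integral_le[OF \<open>rem integrable_on {0..l}\<close> integrable_continuous_interval rem_le])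
    show "continuous_on {0..l} (\<lambda>x. - lam / 2 * energy_density A U w1 w2 \<tau> x)"
      unfolding energy_density_def dplus_def dminus_def
      by (intro continuous_intros continuous_on_coefficients smooth2_continuous_on_x[OF U])
  qed
  also have "\<dots> = - lam * energy A U w1 w2 l \<tau>"
    by (simp add: energy_eq_integral)
  finally have "integral {0..l} rem \<le> - lam * energy A U w1 w2 l \<tau>" .
  moreover have "integral {0..l} rate = flux l - flux 0 + integral {0..l} rem"
    using integral_add[OF has_integral_integrable[OF ftc] \<open>rem integrable_on {0..l}\<close>] integral_unique[OF ftc]
    by simp
  ultimately show ?thesis
    using \<open>flux 0 = 0\<close> \<open>flux l \<le> 0\<close> by (simp add: rate_def)
qed

lemma energy_decay:
  assumes sol: "solves_bvp A \<phi> U" and "\<tau>0 \<le> \<tau>" and \<phi>_vanishes: "\<And>s. \<tau>0 < s \<Longrightarrow> s < \<tau> \<Longrightarrow> \<phi> s = 0"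
  shows "energy A U w1 w2 l \<tau> \<le> energy A U w1 w2 l \<tau>0 * exp (- lam * (\<tau> - \<tau>0))"
proof -
  have E': "((\<lambda>s. energy A U w1 w2 l s) has_real_derivative integral {0..l} (energy_rate_density A U w1 w2 s)) (at s)" for s
    by (intro energy_has_derivative solves_bvp_smooth2[OF sol] continuous_on_coefficients)
  show ?thesis
  proof (rule exp_decay_if_deriv_le[OF \<open>\<tau>0 \<le> \<tau>\<close> _ E'])
    show "continuous_on {\<tau>0..\<tau>} (\<lambda>s. energy A U w1 w2 l s)"
      by (intro continuous_at_imp_continuous_on ballI DERIV_isCont[OF E'])
    show "integral {0..l} (energy_rate_density A U w1 w2 s) \<le> - lam * energy A U w1 w2 l s"
      if "\<tau>0 < s" "s < \<tau>" for s
      using energy_dissipation[OF sol \<phi>_vanishes[OF that]] .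
  qed
qed

end

lemma vanishes_above_Sup_supp:
  assumes "compact (supp \<phi>)" "Sup (supp \<phi>) < s"
  shows "\<phi> s = 0"
proof (rule ccontr)
  assume "\<phi> s \<noteq> 0"
  then have "s \<in> supp \<phi>"
    unfolding supp_def by (simp add: closure_def)
  then have "s \<le> Sup (supp \<phi>)"
    using assms(1) by (intro cSup_upper bounded_imp_bdd_above compact_imp_bounded)
  with assms(2) show False
    by simp
qed

lemma dissipative_weights_g1_g2:
  assumes adm: "admissible A xm xp Ainf" and "0 < l" and A_l: "\<forall>x. x \<ge> l \<longrightarrow> A x = Ainf"
    and M_def: "M = Sup (range (\<lambda>x. \<bar>deriv A x / A x\<bar>))" and "0 < M"
  shows "dissipative_weights A (deriv A) (g1 M l) (g2 M l) (deriv (g1 M l)) (deriv (g2 M l)) l M (lam M l)"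
proof
  fix x :: real
  show "(A has_real_derivative deriv A x) (at x)"
    using adm by (rule admissible_has_derivative)
  show "0 < A x"
    using adm by (rule admissible_pos)
  show "\<bar>deriv A x\<bar> \<le> M * A x"
    using adm M_def by (rule admissible_deriv_bound)
  show "A x = A l" if "l \<le> x"
    using A_l that by simp
  show "(g1 M l has_real_derivative deriv (g1 M l) x) (at x within {0..l})"
    "(g2 M l has_real_derivative deriv (g2 M l) x) (at x within {0..l})"
    using has_real_derivative_g1[OF \<open>0 < M\<close>] has_real_derivative_g2[OF \<open>0 < M\<close>]
    by (simp_all add: deriv_g1 deriv_g2 \<open>0 < M\<close> has_field_derivative_at_within)
  assume "x \<in> {0..l}"
  then have "\<bar>g1 M l x - g2 M l x\<bar> = g1 M l x - g2 M l x"
    using g2_le_g1[OF \<open>0 < M\<close> \<open>0 < l\<close>] by simp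
  then show "lam M l * g1 M l x + M / 2 * \<bar>g1 M l x - g2 M l x\<bar> \<le> deriv (g1 M l) x"
    "lam M l * g2 M l x + M / 2 * \<bar>g1 M l x - g2 M l x\<bar> \<le> - deriv (g2 M l) x"
    by (simp_all add: deriv_g1 deriv_g2 \<open>0 < M\<close>)
qed (use assms g1_0 g2_0 g2_pos[of M l l] in auto)

theorem mainTheorem11:
  fixes A :: "real \<Rightarrow> real" and xm xp Ainf l M :: real
  assumes adm: "admissible A xm xp Ainf"
    and l_pos: "l > 0"
    and A_l: "\<forall>x. x \<ge> l \<longrightarrow> A x = Ainf"
    and M_def: "M = Sup (range (\<lambda>x. \<bar>deriv A x / A x\<bar>))"
    and M_pos: "M > 0"
  shows "(\<forall>x\<in>{0..l}. g1 M l x > 0 \<and> g2 M l x > 0)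
    \<and> g1 M l 0 = 1 \<and> g2 M l 0 = 1
    \<and> (\<forall>x\<in>{0..l}.
          deriv (g1 M l) x - M/2 * \<bar>g1 M l x - g2 M l x\<bar> \<ge> lam M l * g1 M l x
        \<and> - deriv (g2 M l) x - M/2 * \<bar>g1 M l x - g2 M l x\<bar> \<ge> lam M l * g2 M l x)
    \<and> (\<forall>\<phi> U. smooth1 \<phi> \<and> compact (supp \<phi>) \<and> supp \<phi> \<subseteq> {0<..} \<and> supp \<phi> \<noteq> {}
          \<and> solves_bvp A \<phi> U \<longrightarrow>
          (\<forall>\<tau>. \<tau> > Sup (supp \<phi>) \<longrightarrow>
             energy A U (g1 M l) (g2 M l) l \<tau>
               \<le> energy A U (g1 M l) (g2 M l) l (Sup (supp \<phi>))
                  * exp (- lam M l * (\<tau> - Sup (supp \<phi>)))))"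
proof -
  interpret dissipative_weights A "deriv A" "g1 M l" "g2 M l" "deriv (g1 M l)" "deriv (g2 M l)" l M "lam M l"
    using dissipative_weights_g1_g2[OF adm l_pos A_l M_def M_pos] .
  have "\<forall>x\<in>{0..l}. g1 M l x > 0 \<and> g2 M l x > 0"
    using g1_pos[OF M_pos l_pos] g2_pos[OF M_pos l_pos] by simp
  moreover have "\<forall>x\<in>{0..l}.
      deriv (g1 M l) x - M/2 * \<bar>g1 M l x - g2 M l x\<bar> \<ge> lam M l * g1 M l x
    \<and> - deriv (g2 M l) x - M/2 * \<bar>g1 M l x - g2 M l x\<bar> \<ge> lam M l * g2 M l x"
    using w1'_ge w2'_le by fastforce
  moreover have "energy A U (g1 M l) (g2 M l) l \<tau>
      \<le> energy A U (g1 M l) (g2 M l) l (Sup (supp \<phi>)) * exp (- lam M l * (\<tau> - Sup (supp \<phi>)))"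
    if "compact (supp \<phi>)" "solves_bvp A \<phi> U" "Sup (supp \<phi>) < \<tau>" for \<phi> U \<tau>
    by (rule energy_decay[OF that(2)]) (use that vanishes_above_Sup_supp in auto)
  ultimately show ?thesis
    using g1_0[OF M_pos] g2_0[OF M_pos] by blast
qed

end
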